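(* Let $\mathcal H$ be an infinite-dimensional complex Hilbert space and let $\mathcal C_f(\mathcal H)$ be the set of closed forms in $\mathcal V_f(\mathcal H)$. Then $(\mathcal C_f(\mathcal H);\oplus_{|\mathcal C_f(\mathcal H)},o)$ is a generalized effect algebra.
   Context: Bilinear forms $t$ on $\mathcal H$ are sesquilinear maps $D(t)\times D(t)\to\mathbb C$ on a dense linear subspace $D(t)$ (linear in the first argument); $t$ is positive if $t(x,x)\ge0$ on $D(t)$, bounded if $\sup\{t(x,x)\mid x\in D(t),\|x\|=1\}<\infty$. The sum $t+s$ has domain $D(t)\cap D(s)$. $o$ is the zero form on $\mathcal H$. $\mathcal V_f(\mathcal H)$ is the set of positive bilinear forms with dense domain such that $D(t)=\mathcal H$ whenever $t$ is bounded; $t\oplus s$ is defined iff $t$ or $s$ is bounded or $D(t)=D(s)$, and then $t\oplus s=t+s$. A positive form $t$ is closed if $D(t)$ is a Hilbert space under $(x,y)_t=t(x,y)+(1+m_t)(x,y)$ with $m_t=\inf\{t(x,x)\mid x\in D(t),\|x\|=1\}$. For $Q\subseteq\mathcal V_f(\mathcal H)$, $x\oplus_{|Q}y$ is defined iff $x\oplus y$ is defined and lies in $Q$, and then equals $x\oplus y$. A generalized effect algebra is a structure $(E;\oplus,0)$ with a partial operation that is commutative and associative (when one side is defined), has $x\oplus0=x$, is cancellative, and satisfies $x\oplus y=0\Rightarrow x=y=0$. *)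

theory Defs
  imports "HOL-Analysis.Analysis"
begin

text \<open>HOL-Analysis only provides real inner product spaces, so we introduce complex
  vector spaces, complex inner product spaces (inner product linear in the first
  argument) and complex Hilbert spaces as type classes.\<close>

class complex_vector = real_vector +
  fixes scaleC :: "complex \<Rightarrow> 'a \<Rightarrow> 'a"
  assumes scaleC_add_right: "scaleC a (x + y) = scaleC a x + scaleC a y"
    and scaleC_add_left: "scaleC (a + b) x = scaleC a x + scaleC b x"
    and scaleC_scaleC: "scaleC a (scaleC b x) = scaleC (a * b) x"
    and scaleC_one: "scaleC 1 x = x"
    and scaleR_scaleC: "scaleR r x = scaleC (complex_of_real r) x"

class complex_inner = complex_vector + real_normed_vector +
  fixes cinner :: "'a \<Rightarrow> 'a \<Rightarrow> complex"
  assumes cinner_commute: "cinner x y = cnj (cinner y x)"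
    and cinner_add_left: "cinner (x + y) z = cinner x z + cinner y z"
    and cinner_scaleC_left: "cinner (scaleC r x) y = r * cinner x y"
    and cinner_self_real: "Im (cinner x x) = 0"
    and cinner_self_nonneg: "0 \<le> Re (cinner x x)"
    and cinner_self_eq_zero: "cinner x x = 0 \<longleftrightarrow> x = 0"
    and norm_eq_sqrt_cinner: "norm x = sqrt (Re (cinner x x))"

class chilbert_space = complex_inner + complete_space

definition cspan :: "'a::complex_vector set \<Rightarrow> 'a set" where
  "cspan S = {x. \<exists>F c. finite F \<and> F \<subseteq> S \<and> x = (\<Sum>v\<in>F. scaleC (c v) v)}"

definition infinite_dimensional :: "'a::complex_vector itself \<Rightarrow> bool" where
  "infinite_dimensional _ \<longleftrightarrow> \<not> (\<exists>S::'a set. finite S \<and> cspan S = UNIV)"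

text \<open>To make equality of forms mean "same domain
  and same values on the domain", we require the value function to vanish outside
  the domain (canonical representative).\<close>

type_synonym 'a sform = "'a set \<times> ('a \<Rightarrow> 'a \<Rightarrow> complex)"

definition fdom :: "'a sform \<Rightarrow> 'a set" where "fdom t = fst t"
definition fval :: "'a sform \<Rightarrow> 'a \<Rightarrow> 'a \<Rightarrow> complex" where "fval t = snd t"

definition csubspace :: "'a::complex_vector set \<Rightarrow> bool" where
  "csubspace D \<longleftrightarrow> 0 \<in> D \<and> (\<forall>x\<in>D. \<forall>y\<in>D. x + y \<in> D) \<and> (\<forall>c. \<forall>x\<in>D. scaleC c x \<in> D)"

definition is_form :: "'a::chilbert_space sform \<Rightarrow> bool" where
  "is_form t \<longleftrightarrow> csubspace (fdom t) \<and> closure (fdom t) = UNIV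
    \<and> (\<forall>x y. \<not> (x \<in> fdom t \<and> y \<in> fdom t) \<longrightarrow> fval t x y = 0)
    \<and> (\<forall>x\<in>fdom t. \<forall>y\<in>fdom t. \<forall>z\<in>fdom t.
          fval t (x + y) z = fval t x z + fval t y z
        \<and> fval t z (x + y) = fval t z x + fval t z y)
    \<and> (\<forall>c. \<forall>x\<in>fdom t. \<forall>y\<in>fdom t.
          fval t (scaleC c x) y = c * fval t x y
        \<and> fval t x (scaleC c y) = cnj c * fval t x y)"

definition form_positive :: "'a::chilbert_space sform \<Rightarrow> bool" where
  "form_positive t \<longleftrightarrow> (\<forall>x\<in>fdom t. Im (fval t x x) = 0 \<and> 0 \<le> Re (fval t x x))"

definition form_bounded :: "'a::chilbert_space sform \<Rightarrow> bool" where
  "form_bounded t \<longleftrightarrow> (\<exists>M. \<forall>x\<in>fdom t. norm x = 1 \<longrightarrow> Re (fval t x x) \<le> M)"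

definition form_sum :: "'a::chilbert_space sform \<Rightarrow> 'a sform \<Rightarrow> 'a sform" where
  "form_sum t s = (fdom t \<inter> fdom s,
     (\<lambda>x y. if x \<in> fdom t \<inter> fdom s \<and> y \<in> fdom t \<inter> fdom s
            then fval t x y + fval s x y else 0))"

definition zero_form :: "'a::chilbert_space sform" where
  "zero_form = (UNIV, (\<lambda>x y. 0))"

definition Vf :: "'a::chilbert_space sform set" where
  "Vf = {t. is_form t \<and> form_positive t \<and> (form_bounded t \<longrightarrow> fdom t = UNIV)}"

definition form_oplus :: "'a::chilbert_space sform \<Rightarrow> 'a sform \<Rightarrow> 'a sform option" where
  "form_oplus t s = (if form_bounded t \<or> form_bounded s \<or> fdom t = fdom s
                     then Some (form_sum t s) else None)"

definition restrict_oplus ::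
  "'a::chilbert_space sform set \<Rightarrow> 'a sform \<Rightarrow> 'a sform \<Rightarrow> 'a sform option" where
  "restrict_oplus Q t s = (case form_oplus t s of
       Some r \<Rightarrow> (if r \<in> Q then Some r else None) | None \<Rightarrow> None)"

definition form_m :: "'a::chilbert_space sform \<Rightarrow> real" where
  "form_m t = Inf {Re (fval t x x) | x. x \<in> fdom t \<and> norm x = 1}"

definition form_norm :: "'a::chilbert_space sform \<Rightarrow> 'a \<Rightarrow> real" where
  "form_norm t x = sqrt (Re (fval t x x + complex_of_real (1 + form_m t) * cinner x x))"

definition form_closed :: "'a::chilbert_space sform \<Rightarrow> bool" where
  "form_closed t \<longleftrightarrow>
    (\<forall>X::nat \<Rightarrow> 'a. (\<forall>n. X n \<in> fdom t) \<and>
         (\<forall>e>0. \<exists>N. \<forall>m\<ge>N. \<forall>n\<ge>N. form_norm t (X m - X n) < e)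
       \<longrightarrow> (\<exists>x\<in>fdom t. \<forall>e>0. \<exists>N. \<forall>n\<ge>N. form_norm t (X n - x) < e))"

definition Cf :: "'a::chilbert_space sform set" where
  "Cf = {t \<in> Vf. form_closed t}"

definition generalized_effect_algebra ::
  "'b set \<Rightarrow> ('b \<Rightarrow> 'b \<Rightarrow> 'b option) \<Rightarrow> 'b \<Rightarrow> bool" where
  "generalized_effect_algebra E op z \<longleftrightarrow>
     z \<in> E
   \<and> (\<forall>a\<in>E. \<forall>b\<in>E. \<forall>c. op a b = Some c \<longrightarrow> c \<in> E)
   \<and> (\<forall>a\<in>E. \<forall>b\<in>E. op a b = op b a)
   \<and> (\<forall>a\<in>E. \<forall>b\<in>E. \<forall>c\<in>E.
        Option.bind (op a b) (\<lambda>d. op d c) = Option.bind (op b c) (\<lambda>d. op a d))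
   \<and> (\<forall>a\<in>E. op a z = Some a)
   \<and> (\<forall>a\<in>E. \<forall>b\<in>E. \<forall>c\<in>E. op a b \<noteq> None \<and> op a b = op a c \<longrightarrow> b = c)
   \<and> (\<forall>a\<in>E. \<forall>b\<in>E. op a b = Some z \<longrightarrow> a = z \<and> b = z)"

end

theory Submission
  imports Defs
begin

text \<open>A sum of positive
  forms is bounded iff both summands are; this makes the condition under which \<open>\<oplus>\<close> is defined
  stable under reassociation. Sums of closed forms are closed, since on \<open>D(b) \<inter> D(c)\<close> the norm
  of \<open>b + c\<close> is equivalent to the sum of the norms of \<open>b\<close> and \<open>c\<close>. For cancellation, \<open>a \<oplus> b = a \<oplus> c\<close>
  makes \<open>b\<close> and \<open>c\<close> agree on the dense set \<open>D(a) \<inter> D(b)\<close>: if one of them is unbounded the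
  definedness condition forces equal domains, and bounded positive forms are continuous, so by
  polarization they are determined by their diagonal on a dense set. Polarization also shows that
  \<open>a \<oplus> b = o\<close> forces \<open>a = o\<close>. Infinite dimensionality is used only through the existence of a
  nonzero vector.\<close>

lemma fdom_pair [simp]: "fdom (D, f) = D"
  by (simp add: fdom_def)

lemma fval_pair [simp]: "fval (D, f) = f"
  by (simp add: fval_def)

lemma form_eqI: "fdom t = fdom s \<Longrightarrow> fval t = fval s \<Longrightarrow> t = s"
  by (simp add: fdom_def fval_def prod_eq_iff)

lemma fdom_form_sum [simp]: "fdom (form_sum t s) = fdom t \<inter> fdom s"
  by (simp add: form_sum_def)

lemma fval_form_sum:
  "fval (form_sum t s) x y =
     (if x \<in> fdom t \<inter> fdom s \<and> y \<in> fdom t \<inter> fdom s then fval t x y + fval s x y else 0)"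
  by (simp add: form_sum_def)

lemma form_sum_commute: "form_sum t s = form_sum s t"
  unfolding form_sum_def by (auto simp: fun_eq_iff add.commute)

lemma form_sum_assoc: "form_sum (form_sum a b) c = form_sum a (form_sum b c)"
  by (rule form_eqI) (auto simp: fval_form_sum fun_eq_iff add.assoc)

lemma form_bounded_zero_form: "form_bounded zero_form"
  unfolding form_bounded_def zero_form_def by auto

lemma scaleC_minus_one: "scaleC (-1) x = - (x::'a::complex_vector)"
  using scaleR_scaleC[of "-1" x] by simp

lemma scaleC_zero_left: "scaleC 0 x = (0::'a::complex_vector)"
  using scaleR_scaleC[of 0 x] by simp

lemma csubspace_UNIV: "csubspace UNIV"
  by (simp add: csubspace_def)

lemma csubspace_diff: "csubspace D \<Longrightarrow> x \<in> D \<Longrightarrow> y \<in> D \<Longrightarrow> x - y \<in> D"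
  unfolding csubspace_def by (metis scaleC_minus_one diff_conv_add_uminus)

lemma csubspace_scaleR: "csubspace D \<Longrightarrow> x \<in> D \<Longrightarrow> scaleR r x \<in> D"
  unfolding csubspace_def by (simp add: scaleR_scaleC)

lemma cinner_self_eq_norm_sq: "cinner x x = complex_of_real ((norm x)\<^sup>2)"
proof -
  have "(norm x)\<^sup>2 = Re (cinner x x)"
    using norm_eq_sqrt_cinner[of x] cinner_self_nonneg[of x] by simp
  then show ?thesis
    using cinner_self_real[of x] by (simp add: complex_eq_iff)
qed

lemma infinite_dimensional_nontrivial:
  assumes "infinite_dimensional TYPE('a::complex_vector)"
  shows "\<exists>x::'a. x \<noteq> 0"
proof (rule ccontr)
  assume "\<not> ?thesis"
  then have "cspan ({}::'a set) = UNIV"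
    unfolding cspan_def by auto
  then show False
    using assms unfolding infinite_dimensional_def by blast
qed

lemma sesquilinear_eq_zero_if_diag_eq_zero:
  fixes f :: "'a::complex_vector \<Rightarrow> 'a \<Rightarrow> complex"
  assumes add_left: "\<And>x y z. x \<in> D \<Longrightarrow> y \<in> D \<Longrightarrow> z \<in> D \<Longrightarrow> f (x + y) z = f x z + f y z"
    and add_right: "\<And>x y z. x \<in> D \<Longrightarrow> y \<in> D \<Longrightarrow> z \<in> D \<Longrightarrow> f z (x + y) = f z x + f z y"
    and scale_left: "\<And>c x y. x \<in> D \<Longrightarrow> y \<in> D \<Longrightarrow> f (scaleC c x) y = c * f x y"
    and scale_right: "\<And>c x y. x \<in> D \<Longrightarrow> y \<in> D \<Longrightarrow> f x (scaleC c y) = cnj c * f x y"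
    and D: "csubspace D"
    and diag: "\<And>u. u \<in> D \<Longrightarrow> f u u = 0"
    and x: "x \<in> D" and y: "y \<in> D"
  shows "f x y = 0"
proof -
  have iy: "scaleC \<i> y \<in> D" and xy: "x + y \<in> D" and xiy: "x + scaleC \<i> y \<in> D"
    using D x y unfolding csubspace_def by auto
  have "f (x + y) (x + y) = f x x + f x y + (f y x + f y y)"
    using add_left[OF x y xy] add_right[OF x y x] add_right[OF x y y] by simp
  then have sym: "f x y + f y x = 0"
    using diag[OF xy] diag[OF x] diag[OF y] by simp
  have "f (x + scaleC \<i> y) (x + scaleC \<i> y)
      = f x x + f x (scaleC \<i> y) + (f (scaleC \<i> y) x + f (scaleC \<i> y) (scaleC \<i> y))"
    using add_left[OF x iy xiy] add_right[OF x iy x] add_right[OF x iy iy] by simp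
  also have "\<dots> = f x x + (- \<i>) * f x y + (\<i> * f y x + f y y)"
    using scale_left[OF y x, of \<i>] scale_right[OF x y, of \<i>]
      scale_left[OF y iy, of \<i>] scale_right[OF y y, of \<i>] by simp
  finally have "\<i> * (f y x - f x y) = 0"
    using diag[OF xiy] diag[OF x] diag[OF y] by (simp add: algebra_simps)
  with sym show ?thesis
    by simp
qed

lemma quadratic_nonneg_imp_discriminant_le:
  fixes P Q S :: real
  assumes nonneg: "\<And>r. 0 \<le> P + r * S + r\<^sup>2 * Q" and "0 \<le> P" and "0 \<le> Q"
  shows "S\<^sup>2 \<le> 4 * P * Q"
proof (cases "Q = 0")
  case True
  have "S = 0"
  proof (rule ccontr)
    assume "S \<noteq> 0"
    with True nonneg[of "- (P + 1) / S"] show False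
      by simp
  qed
  with assms show ?thesis
    by simp
next
  case False
  with \<open>0 \<le> Q\<close> have "0 < Q"
    by simp
  have "0 \<le> P + (- S / (2 * Q)) * S + (- S / (2 * Q))\<^sup>2 * Q"
    by (rule nonneg)
  also have "\<dots> = P - S\<^sup>2 / (4 * Q)"
    using \<open>0 < Q\<close> by (simp add: field_simps power2_eq_square)
  finally show ?thesis
    using \<open>0 < Q\<close> by (simp add: field_simps)
qed

lemma VfD:
  assumes "t \<in> Vf"
  shows "csubspace (fdom t)" and "closure (fdom t) = UNIV"
    and "\<not> (x \<in> fdom t \<and> y \<in> fdom t) \<Longrightarrow> fval t x y = 0"
    and "form_bounded t \<Longrightarrow> fdom t = UNIV"
  using assms unfolding Vf_def is_form_def by auto

lemma Vf_sesquilinear: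
  assumes "t \<in> Vf" and "x \<in> fdom t" and "y \<in> fdom t" and "z \<in> fdom t"
  shows "fval t (x + y) z = fval t x z + fval t y z"
    and "fval t z (x + y) = fval t z x + fval t z y"
    and "fval t (scaleC c x) y = c * fval t x y"
    and "fval t x (scaleC c y) = cnj c * fval t x y"
  using assms unfolding Vf_def is_form_def by auto

lemma Vf_diag_nonneg:
  assumes "t \<in> Vf"
  shows "Im (fval t x x) = 0" and "0 \<le> Re (fval t x x)"
proof (atomize (full), cases "x \<in> fdom t")
  case True
  with assms show "Im (fval t x x) = 0 \<and> 0 \<le> Re (fval t x x)"
    by (simp add: Vf_def form_positive_def)
qed (simp add: VfD(3)[OF assms])

lemma Vf_eqI:
  assumes "b \<in> Vf" and "c \<in> Vf" and dom: "fdom b = fdom c"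
    and agree: "\<And>x y. x \<in> fdom b \<Longrightarrow> y \<in> fdom b \<Longrightarrow> fval b x y = fval c x y"
  shows "b = c"
proof (rule form_eqI[OF dom], intro ext)
  fix x y
  show "fval b x y = fval c x y"
    using agree[of x y] VfD(3)[OF assms(1), of x y] VfD(3)[OF assms(2), of x y] dom
    by (cases "x \<in> fdom b \<and> y \<in> fdom b") auto
qed

lemma form_sum_zero_form: "t \<in> Vf \<Longrightarrow> form_sum t zero_form = t"
  by (rule form_eqI) (auto simp: fval_form_sum fun_eq_iff zero_form_def dest: VfD(3))

lemma form_bounded_mono:
  assumes "form_bounded s" and "fdom t \<subseteq> fdom s"
    and le: "\<And>x. x \<in> fdom t \<Longrightarrow> Re (fval t x x) \<le> Re (fval s x x)"
  shows "form_bounded t"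
proof -
  obtain M where "\<And>x. x \<in> fdom s \<Longrightarrow> norm x = 1 \<Longrightarrow> Re (fval s x x) \<le> M"
    using assms(1) unfolding form_bounded_def by blast
  with assms(2) le show ?thesis
    unfolding form_bounded_def by (meson order_trans subsetD)
qed

lemma Vf_diag_add_scaleR:
  assumes t: "t \<in> Vf" and u: "u \<in> fdom t" and h: "h \<in> fdom t"
  shows "Re (fval t (u + scaleR r h) (u + scaleR r h))
       = Re (fval t u u) + r * Re (fval t u h + fval t h u) + r\<^sup>2 * Re (fval t h h)"
proof -
  define c where "c = complex_of_real r"
  have v: "scaleC c h \<in> fdom t" and uv: "u + scaleC c h \<in> fdom t"
    using VfD(1)[OF t] u h unfolding csubspace_def by auto
  note L = Vf_sesquilinear[OF t]
  have "fval t (u + scaleC c h) (u + scaleC c h)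
      = fval t u u + fval t u (scaleC c h) + (fval t (scaleC c h) u + fval t (scaleC c h) (scaleC c h))"
    by (simp add: L[OF u v uv] L[OF u v u] L[OF u v v])
  also have "\<dots> = fval t u u + c * (fval t u h + fval t h u) + c\<^sup>2 * fval t h h"
    using L(3)[OF h u u, of c] L(4)[OF u h h, of c] L(3)[OF h v v, of c] L(4)[OF h h h, of c]
    by (simp add: c_def algebra_simps power2_eq_square)
  finally show ?thesis
    by (simp add: scaleR_scaleC c_def power2_eq_square)
qed

lemma Vf_cross_term_sq_le:
  assumes t: "t \<in> Vf" and "u \<in> fdom t" and "h \<in> fdom t"
  shows "(Re (fval t u h + fval t h u))\<^sup>2 \<le> 4 * Re (fval t u u) * Re (fval t h h)"
proof (rule quadratic_nonneg_imp_discriminant_le)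
  show "0 \<le> Re (fval t u u) + r * Re (fval t u h + fval t h u) + r\<^sup>2 * Re (fval t h h)" for r
    using Vf_diag_nonneg(2)[OF t, of "u + scaleR r h"] Vf_diag_add_scaleR[OF assms] by simp
qed (use Vf_diag_nonneg(2)[OF t] in auto)

lemma Vf_bounded_quadratic_bound:
  assumes t: "t \<in> Vf" and "form_bounded t"
  shows "\<exists>M\<ge>0. \<forall>x. Re (fval t x x) \<le> M * (norm x)\<^sup>2"
proof -
  have U: "fdom t = UNIV"
    using VfD(4)[OF assms] .
  note L = Vf_sesquilinear[OF t, unfolded U, simplified]
  obtain M where M: "\<And>x. norm x = 1 \<Longrightarrow> Re (fval t x x) \<le> M"
    using assms(2) U unfolding form_bounded_def by auto
  have "Re (fval t x x) \<le> max M 0 * (norm x)\<^sup>2" for x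
  proof (cases "x = 0")
    case True
    then show ?thesis
      using L(3)[of 0 0 0] by (simp add: scaleC_zero_left)
  next
    case False
    define r where "r = norm x"
    define u where "u = scaleR (1 / r) x"
    have "norm u = 1" and x: "x = scaleC (complex_of_real r) u"
      using False by (simp_all add: u_def r_def flip: scaleR_scaleC)
    have "fval t (scaleC (complex_of_real r) u) (scaleC (complex_of_real r) u)
        = complex_of_real r * complex_of_real r * fval t u u"
      by (simp only: L(3,4) complex_cnj_complex_of_real mult.assoc)
    then have "Re (fval t x x) = r\<^sup>2 * Re (fval t u u)"
      by (simp add: x power2_eq_square)
    also have "\<dots> \<le> r\<^sup>2 * max M 0"
      using M[OF \<open>norm u = 1\<close>] by (intro mult_left_mono) auto
    finally show ?thesis
      by (simp add: r_def mult.commute)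
  qed
  then show ?thesis
    by (intro exI[of _ "max M 0"]) auto
qed

lemma Vf_bounded_diag_diff_le:
  assumes t: "t \<in> Vf" and "form_bounded t" and "0 \<le> M"
    and M: "\<And>x. Re (fval t x x) \<le> M * (norm x)\<^sup>2"
  shows "\<bar>Re (fval t (u + h) (u + h)) - Re (fval t u u)\<bar> \<le> 2 * M * norm u * norm h + M * (norm h)\<^sup>2"
proof -
  have U: "fdom t = UNIV"
    using VfD(4)[OF t assms(2)] .
  define S where "S = Re (fval t u h + fval t h u)"
  have "S\<^sup>2 \<le> 4 * Re (fval t u u) * Re (fval t h h)"
    unfolding S_def by (rule Vf_cross_term_sq_le[OF t]) (simp_all add: U)
  also have "\<dots> \<le> 4 * (M * (norm u)\<^sup>2) * (M * (norm h)\<^sup>2)"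
  proof -
    have "0 \<le> Re (fval t u u)" and "0 \<le> Re (fval t h h)"
      using Vf_diag_nonneg(2)[OF t] by blast+
    with M[of u] M[of h] have "Re (fval t u u) * Re (fval t h h) \<le> (M * (norm u)\<^sup>2) * (M * (norm h)\<^sup>2)"
      by (intro mult_mono) linarith+
    then show ?thesis
      by simp
  qed
  also have "\<dots> = (2 * M * norm u * norm h)\<^sup>2"
    by (simp add: power2_eq_square)
  finally have "\<bar>S\<bar>\<^sup>2 \<le> (2 * M * norm u * norm h)\<^sup>2"
    by simp
  then have S: "\<bar>S\<bar> \<le> 2 * M * norm u * norm h"
    by (rule power2_le_imp_le) (simp add: \<open>0 \<le> M\<close>)
  have "Re (fval t (u + h) (u + h)) - Re (fval t u u) = S + Re (fval t h h)"
    using Vf_diag_add_scaleR[OF t, of u h 1] by (simp add: U S_def)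
  then have "\<bar>Re (fval t (u + h) (u + h)) - Re (fval t u u)\<bar> \<le> \<bar>S\<bar> + Re (fval t h h)"
    using abs_triangle_ineq[of S "Re (fval t h h)"] Vf_diag_nonneg(2)[OF t, of h] by simp
  also have "\<dots> \<le> 2 * M * norm u * norm h + M * (norm h)\<^sup>2"
    using S M[of h] by (rule add_mono)
  finally show ?thesis .
qed

lemma Vf_bounded_diag_tendsto:
  assumes t: "t \<in> Vf" and B: "form_bounded t" and X: "X \<longlonglongrightarrow> x"
  shows "(\<lambda>n. Re (fval t (X n) (X n))) \<longlonglongrightarrow> Re (fval t x x)"
proof -
  obtain M where "0 \<le> M" and M: "\<And>x. Re (fval t x x) \<le> M * (norm x)\<^sup>2"
    using Vf_bounded_quadratic_bound[OF t B] by blast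
  define g where "g = (\<lambda>n. 2 * M * norm (X n) * norm (x - X n) + M * (norm (x - X n))\<^sup>2)"
  have "(\<lambda>n. x - X n) \<longlonglongrightarrow> x - x"
    by (intro tendsto_intros X)
  then have "(\<lambda>n. norm (x - X n)) \<longlonglongrightarrow> 0"
    by (simp add: tendsto_norm_zero_iff)
  from tendsto_mult[OF tendsto_mult[OF tendsto_const tendsto_norm[OF X]] this]
    tendsto_mult[OF tendsto_const tendsto_power[OF this, of 2]]
  have g: "g \<longlonglongrightarrow> 0"
    unfolding g_def by (auto intro: tendsto_add_zero)
  have bound: "\<forall>n. norm (Re (fval t (X n) (X n)) - Re (fval t x x)) \<le> g n"
  proof
    fix n
    show "norm (Re (fval t (X n) (X n)) - Re (fval t x x)) \<le> g n"
      using Vf_bounded_diag_diff_le[OF t B \<open>0 \<le> M\<close> M, of "X n" "x - X n"] by (simp add: g_def)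
  qed
  have "(\<lambda>n. Re (fval t (X n) (X n)) - Re (fval t x x)) \<longlonglongrightarrow> 0"
    by (rule Lim_null_comparison[OF always_eventually[OF bound] g])
  then show ?thesis
    by (rule LIM_zero_cancel)
qed

lemma Vf_bounded_eqI:
  assumes b: "b \<in> Vf" and c: "c \<in> Vf" and "form_bounded b" and "form_bounded c"
    and D: "closure D = UNIV" and agree: "\<And>x. x \<in> D \<Longrightarrow> fval b x x = fval c x x"
  shows "b = c"
proof -
  have Ub: "fdom b = UNIV" and Uc: "fdom c = UNIV"
    using VfD(4) assms by blast+
  have diag: "fval b x x = fval c x x" for x
  proof -
    obtain X where "\<And>n. X n \<in> D" and X: "X \<longlonglongrightarrow> x"
      using D closure_sequential[of x D] by auto
    then have "(\<lambda>n. Re (fval b (X n) (X n))) \<longlonglongrightarrow> Re (fval c x x)"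
      using Vf_bounded_diag_tendsto[OF c \<open>form_bounded c\<close> X] agree by simp
    with Vf_bounded_diag_tendsto[OF b \<open>form_bounded b\<close> X] have "Re (fval b x x) = Re (fval c x x)"
      by (rule LIMSEQ_unique)
    then show ?thesis
      using Vf_diag_nonneg(1)[OF b, of x] Vf_diag_nonneg(1)[OF c, of x] by (simp add: complex_eq_iff)
  qed
  note Lb = Vf_sesquilinear[OF b, unfolded Ub, simplified]
    and Lc = Vf_sesquilinear[OF c, unfolded Uc, simplified]
  have "fval b x y - fval c x y = 0" for x y
    by (rule sesquilinear_eq_zero_if_diag_eq_zero[where D = UNIV])
      (simp_all add: Lb Lc diag csubspace_UNIV algebra_simps)
  then show ?thesis
    by (intro Vf_eqI[OF b c]) (simp_all add: Ub Uc)
qed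

definition oplus_defined :: "'a::chilbert_space sform \<Rightarrow> 'a sform \<Rightarrow> bool" where
  "oplus_defined t s \<longleftrightarrow> form_bounded t \<or> form_bounded s \<or> fdom t = fdom s"

lemma oplus_defined_commute: "oplus_defined t s \<longleftrightarrow> oplus_defined s t"
  unfolding oplus_defined_def by auto

lemma restrict_oplus_eq_Some_iff:
  "restrict_oplus Q t s = Some r \<longleftrightarrow> oplus_defined t s \<and> r = form_sum t s \<and> r \<in> Q"
  unfolding restrict_oplus_def form_oplus_def oplus_defined_def by auto

lemma restrict_oplus_commute: "restrict_oplus Q t s = restrict_oplus Q s t"
  unfolding restrict_oplus_def form_oplus_def by (auto simp: form_sum_commute)

lemma form_bounded_form_sum:
  assumes "form_bounded b" and "form_bounded c"
  shows "form_bounded (form_sum b c)"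
proof -
  obtain Mb Mc where "\<And>x. x \<in> fdom b \<Longrightarrow> norm x = 1 \<Longrightarrow> Re (fval b x x) \<le> Mb"
    and "\<And>x. x \<in> fdom c \<Longrightarrow> norm x = 1 \<Longrightarrow> Re (fval c x x) \<le> Mc"
    using assms unfolding form_bounded_def by blast
  then have "Re (fval (form_sum b c) x x) \<le> Mb + Mc" if "x \<in> fdom (form_sum b c)" "norm x = 1" for x
    using that by (fastforce simp: fval_form_sum intro: add_mono)
  then show ?thesis
    unfolding form_bounded_def by blast
qed

lemma form_bounded_summand:
  assumes "b \<in> Vf" and "fdom c \<subseteq> fdom b" and "form_bounded (form_sum b c)"
  shows "form_bounded c"
proof (rule form_bounded_mono[OF assms(3)])
  show "Re (fval c x x) \<le> Re (fval (form_sum b c) x x)" if "x \<in> fdom c" for x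
    using that assms(2) Vf_diag_nonneg(2)[OF assms(1), of x] by (auto simp: fval_form_sum)
qed (use assms(2) in auto)

lemma form_bounded_form_sum_iff:
  assumes b: "b \<in> Vf" and c: "c \<in> Vf" and "oplus_defined b c"
  shows "form_bounded (form_sum b c) \<longleftrightarrow> form_bounded b \<and> form_bounded c"
proof
  assume B: "form_bounded (form_sum b c)"
  then have B': "form_bounded (form_sum c b)"
    by (simp add: form_sum_commute)
  from \<open>oplus_defined b c\<close> consider "form_bounded b" | "form_bounded c" | "fdom b = fdom c"
    unfolding oplus_defined_def by blast
  then show "form_bounded b \<and> form_bounded c"
  proof cases
    case 1
    with form_bounded_summand[OF b _ B] show ?thesis
      using VfD(4)[OF b] by auto
  next
    case 2
    with form_bounded_summand[OF c _ B'] show ?thesis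
      using VfD(4)[OF c] by auto
  next
    case 3
    with form_bounded_summand[OF b _ B] form_bounded_summand[OF c _ B'] show ?thesis
      by auto
  qed
qed (simp add: form_bounded_form_sum)

lemma Vf_form_sum:
  assumes b: "b \<in> Vf" and c: "c \<in> Vf" and "oplus_defined b c"
  shows "form_sum b c \<in> Vf"
proof -
  let ?s = "form_sum b c"
  have sub: "csubspace (fdom ?s)"
    using VfD(1)[OF b] VfD(1)[OF c] unfolding csubspace_def by auto
  have "fdom ?s = fdom b \<or> fdom ?s = fdom c"
    using \<open>oplus_defined b c\<close> VfD(4)[OF b] VfD(4)[OF c] unfolding oplus_defined_def by auto
  then have dense: "closure (fdom ?s) = UNIV"
    using VfD(2)[OF b] VfD(2)[OF c] by auto
  note Lb = Vf_sesquilinear[OF b] and Lc = Vf_sesquilinear[OF c]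
  have add: "fval ?s (x + y) z = fval ?s x z + fval ?s y z \<and> fval ?s z (x + y) = fval ?s z x + fval ?s z y"
    if "x \<in> fdom ?s" "y \<in> fdom ?s" "z \<in> fdom ?s" for x y z
  proof -
    have "x + y \<in> fdom ?s"
      using sub that unfolding csubspace_def by blast
    with that show ?thesis
      by (auto simp: fval_form_sum Lb Lc)
  qed
  have scale: "fval ?s (scaleC a x) y = a * fval ?s x y \<and> fval ?s x (scaleC a y) = cnj a * fval ?s x y"
    if "x \<in> fdom ?s" "y \<in> fdom ?s" for a x y
  proof -
    have "scaleC a x \<in> fdom ?s" "scaleC a y \<in> fdom ?s"
      using sub that unfolding csubspace_def by blast+
    with that show ?thesis
      by (auto simp: fval_form_sum Lb Lc algebra_simps)
  qed
  have "form_positive ?s"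
    unfolding form_positive_def using Vf_diag_nonneg[OF b] Vf_diag_nonneg[OF c]
    by (auto simp: fval_form_sum)
  moreover have "form_bounded ?s \<longrightarrow> fdom ?s = UNIV"
    using form_bounded_form_sum_iff[OF assms] VfD(4)[OF b] VfD(4)[OF c] by auto
  ultimately show ?thesis
    unfolding Vf_def is_form_def using sub dense add scale by (auto simp: fval_form_sum)
qed

lemma oplus_defined_assoc:
  assumes a: "a \<in> Vf" and b: "b \<in> Vf" and c: "c \<in> Vf"
    and ab: "oplus_defined a b" and ab_c: "oplus_defined (form_sum a b) c"
  shows "oplus_defined b c" and "oplus_defined a (form_sum b c)"
proof -
  note Ua = VfD(4)[OF a] and Ub = VfD(4)[OF b] and Uc = VfD(4)[OF c]
  from ab consider "form_bounded a" | "form_bounded b" | "fdom a = fdom b"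
    unfolding oplus_defined_def by blast
  note ab_cases = this
  from ab_c consider "form_bounded a \<and> form_bounded b" | "form_bounded c" | "fdom a \<inter> fdom b = fdom c"
    unfolding oplus_defined_def form_bounded_form_sum_iff[OF a b ab] by auto
  note ab_c_cases = this
  show bc: "oplus_defined b c"
    unfolding oplus_defined_def
    by (cases rule: ab_c_cases; cases rule: ab_cases) (blast dest: Ua)+
  show "oplus_defined a (form_sum b c)"
    unfolding oplus_defined_def form_bounded_form_sum_iff[OF b c bc] fdom_form_sum
    by (cases rule: ab_c_cases; cases rule: ab_cases) (blast dest: Ub Uc)+
qed

lemma form_sum_eq_form_sumD:
  assumes eq: "form_sum a b = form_sum a c"
  shows "fdom a \<inter> fdom b = fdom a \<inter> fdom c"
    and "x \<in> fdom a \<inter> fdom b \<Longrightarrow> y \<in> fdom a \<inter> fdom b \<Longrightarrow> fval b x y = fval c x y"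
proof -
  show dom: "fdom a \<inter> fdom b = fdom a \<inter> fdom c"
    using arg_cong[OF eq, of fdom] by simp
  have "fval (form_sum a b) x y = fval (form_sum a c) x y"
    by (simp only: eq)
  then show "x \<in> fdom a \<inter> fdom b \<Longrightarrow> y \<in> fdom a \<inter> fdom b \<Longrightarrow> fval b x y = fval c x y"
    using dom by (simp add: fval_form_sum)
qed

lemma form_sum_cancel_unbounded:
  assumes a: "a \<in> Vf" and b: "b \<in> Vf" and c: "c \<in> Vf"
    and "oplus_defined a b" and "oplus_defined a c"
    and eq: "form_sum a b = form_sum a c" and "\<not> form_bounded b"
  shows "b = c"
proof -
  have unbounded_dom: "fdom a \<inter> fdom t = fdom t" if "oplus_defined a t" "\<not> form_bounded t" for t
    using that VfD(4)[OF a] unfolding oplus_defined_def by auto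
  note dom = form_sum_eq_form_sumD(1)[OF eq]
  have agree: "fval b x y = fval c x y" if "x \<in> fdom b" "y \<in> fdom b" for x y
    using form_sum_eq_form_sumD(2)[OF eq] that
      unbounded_dom[OF \<open>oplus_defined a b\<close> \<open>\<not> form_bounded b\<close>] by blast
  have "\<not> form_bounded c"
  proof
    assume "form_bounded c"
    then have "form_bounded b"
      by (rule form_bounded_mono) (simp_all add: VfD(4)[OF c \<open>form_bounded c\<close>] agree)
    with \<open>\<not> form_bounded b\<close> show False ..
  qed
  then have "fdom b = fdom c"
    using dom unbounded_dom[OF \<open>oplus_defined a b\<close> \<open>\<not> form_bounded b\<close>]
      unbounded_dom[OF \<open>oplus_defined a c\<close>] by simp
  then show ?thesis
    using Vf_eqI[OF b c] agree by blast
qed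

lemma form_sum_cancel:
  assumes a: "a \<in> Vf" and b: "b \<in> Vf" and c: "c \<in> Vf"
    and ab: "oplus_defined a b" and ac: "oplus_defined a c"
    and eq: "form_sum a b = form_sum a c"
  shows "b = c"
proof (cases "form_bounded b \<and> form_bounded c")
  case True
  show ?thesis
  proof (rule Vf_bounded_eqI[OF b c])
    show "closure (fdom (form_sum a b)) = UNIV"
      using VfD(2)[OF Vf_form_sum[OF a b ab]] .
    show "fval b x x = fval c x x" if "x \<in> fdom (form_sum a b)" for x
      using form_sum_eq_form_sumD(2)[OF eq] that by simp
  qed (use True in auto)
next
  case False
  then show ?thesis
    using form_sum_cancel_unbounded[OF a b c ab ac eq]
      form_sum_cancel_unbounded[OF a c b ac ab eq[symmetric]] by blast
qed

lemma form_sum_eq_zero_form: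
  assumes a: "a \<in> Vf" and b: "b \<in> Vf" and eq: "form_sum a b = zero_form"
  shows "a = zero_form"
proof -
  have dom: "fdom a = UNIV" "fdom b = UNIV"
    using arg_cong[OF eq, of fdom] by (auto simp: zero_form_def)
  have sum: "fval a x y + fval b x y = 0" for x y
    using fun_cong[OF fun_cong[OF arg_cong[OF eq, of fval]], of x y] dom
    by (simp add: fval_form_sum zero_form_def)
  have "Re (fval a x x) = 0" for x
    using arg_cong[OF sum[of x x], of Re] Vf_diag_nonneg(2)[OF a, of x] Vf_diag_nonneg(2)[OF b, of x]
    by simp
  then have diag: "fval a x x = 0" for x
    using Vf_diag_nonneg(1)[OF a, of x] by (simp add: complex_eq_iff)
  note La = Vf_sesquilinear[OF a, unfolded dom, simplified]
  have "fval a x y = 0" for x y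
    by (rule sesquilinear_eq_zero_if_diag_eq_zero[where D = UNIV])
      (simp_all add: La diag csubspace_UNIV)
  then show ?thesis
    using dom by (intro form_eqI) (auto simp: zero_form_def fun_eq_iff)
qed

lemma restrict_oplus_zero_form:
  assumes "a \<in> Cf"
  shows "restrict_oplus Cf a zero_form = Some a"
proof -
  have "oplus_defined a zero_form"
    using form_bounded_zero_form unfolding oplus_defined_def by blast
  with assms show ?thesis
    using form_sum_zero_form[of a] by (simp add: restrict_oplus_eq_Some_iff Cf_def)
qed

lemma restrict_oplus_cancel:
  assumes "a \<in> Cf" and "b \<in> Cf" and "c \<in> Cf"
    and "restrict_oplus Cf a b = Some r" and "restrict_oplus Cf a c = Some r"
  shows "b = c"
  using assms form_sum_cancel[of a b c] by (simp add: restrict_oplus_eq_Some_iff Cf_def)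

lemma restrict_oplus_eq_zero_form:
  assumes "a \<in> Cf" and "b \<in> Cf" and "restrict_oplus Cf a b = Some zero_form"
  shows "a = zero_form"
  using assms form_sum_eq_zero_form[of a b] by (simp add: restrict_oplus_eq_Some_iff Cf_def)

definition form_Cauchy :: "'a::chilbert_space sform \<Rightarrow> (nat \<Rightarrow> 'a) \<Rightarrow> bool" where
  "form_Cauchy t X \<longleftrightarrow> (\<forall>e>0. \<exists>N. \<forall>m\<ge>N. \<forall>n\<ge>N. form_norm t (X m - X n) < e)"

lemma form_Cauchy_dominated:
  assumes "form_Cauchy s X" and "0 < K"
    and le: "\<And>m n. form_norm t (X m - X n) \<le> K * form_norm s (X m - X n)"
  shows "form_Cauchy t X"
  unfolding form_Cauchy_def
proof (intro allI impI)
  fix e :: real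
  assume "0 < e"
  then obtain N where N: "\<And>m n. m \<ge> N \<Longrightarrow> n \<ge> N \<Longrightarrow> form_norm s (X m - X n) < e / K"
    using assms(1,2) unfolding form_Cauchy_def by (meson divide_pos_pos)
  have "form_norm t (X m - X n) < e" if "m \<ge> N" "n \<ge> N" for m n
  proof -
    have "form_norm t (X m - X n) \<le> K * form_norm s (X m - X n)"
      by (rule le)
    also have "\<dots> < K * (e / K)"
      using N[OF that] \<open>0 < K\<close> by (rule mult_strict_left_mono)
    finally show ?thesis
      using \<open>0 < K\<close> by simp
  qed
  then show "\<exists>N. \<forall>m\<ge>N. \<forall>n\<ge>N. form_norm t (X m - X n) < e"
    by blast
qed

context
  assumes nontrivial: "\<exists>x::'a::chilbert_space. x \<noteq> 0"
begin

lemma Vf_ex_unit_in_fdom: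
  assumes t: "(t::'a sform) \<in> Vf"
  shows "\<exists>x\<in>fdom t. norm x = 1"
proof -
  have "\<exists>y\<in>fdom t. y \<noteq> 0"
  proof (rule ccontr)
    assume "\<not> ?thesis"
    then have "closure (fdom t) \<subseteq> {0}"
      using closure_mono[of "fdom t" "{0}"] by auto
    then show False
      using nontrivial VfD(2)[OF t] by auto
  qed
  then obtain y where y: "y \<in> fdom t" "y \<noteq> 0"
    by blast
  then have "scaleR (1 / norm y) y \<in> fdom t"
    using csubspace_scaleR[OF VfD(1)[OF t]] by blast
  with y show ?thesis
    by (intro bexI[of _ "scaleR (1 / norm y) y"]) simp_all
qed

text \<open>Nontriviality makes the set of unit vectors defining \<open>m\<^sub>t\<close> nonempty; \<open>Inf {}\<close> would be
  unspecified.\<close>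

lemma form_m_nonneg:
  assumes t: "(t::'a sform) \<in> Vf"
  shows "0 \<le> form_m t"
  unfolding form_m_def
proof (rule cInf_greatest)
  show "{Re (fval t x x) |x. x \<in> fdom t \<and> norm x = 1} \<noteq> {}"
    using Vf_ex_unit_in_fdom[OF t] by auto
qed (use Vf_diag_nonneg(2)[OF t] in auto)

lemma form_norm_sq:
  assumes t: "(t::'a sform) \<in> Vf"
  shows "(form_norm t x)\<^sup>2 = Re (fval t x x) + (1 + form_m t) * (norm x)\<^sup>2"
    and "0 \<le> form_norm t x"
proof -
  have "0 \<le> Re (fval t x x) + (1 + form_m t) * (norm x)\<^sup>2"
    using Vf_diag_nonneg(2)[OF t, of x] form_m_nonneg[OF t] by simp
  moreover have "form_norm t x = sqrt (Re (fval t x x) + (1 + form_m t) * (norm x)\<^sup>2)"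
    unfolding form_norm_def cinner_self_eq_norm_sq by simp
  ultimately show "(form_norm t x)\<^sup>2 = Re (fval t x x) + (1 + form_m t) * (norm x)\<^sup>2"
    and "0 \<le> form_norm t x"
    by simp_all
qed

lemma norm_le_form_norm:
  assumes t: "(t::'a sform) \<in> Vf"
  shows "norm x \<le> form_norm t x"
proof (rule power2_le_imp_le)
  show "(norm x)\<^sup>2 \<le> (form_norm t x)\<^sup>2"
    using Vf_diag_nonneg(2)[OF t, of x] form_m_nonneg[OF t]
    by (simp add: form_norm_sq(1)[OF t] distrib_right)
qed (rule form_norm_sq(2)[OF t])

lemma form_closed_iff:
  assumes "(t::'a sform) \<in> Vf"
  shows "form_closed t \<longleftrightarrow> (\<forall>X. (\<forall>n. X n \<in> fdom t) \<and> form_Cauchy t X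
      \<longrightarrow> (\<exists>x\<in>fdom t. (\<lambda>n. form_norm t (X n - x)) \<longlonglongrightarrow> 0))"
  unfolding form_closed_def form_Cauchy_def LIMSEQ_iff
  using form_norm_sq(2)[OF assms] by simp

lemma form_Cauchy_imp_Cauchy:
  assumes "(t::'a sform) \<in> Vf" and "form_Cauchy t X"
  shows "Cauchy X"
  using assms(2) norm_le_form_norm[OF assms(1)] unfolding Cauchy_iff form_Cauchy_def
  by (meson le_less_trans)

lemma form_norm_tendsto_imp_LIMSEQ:
  assumes "(t::'a sform) \<in> Vf" and "(\<lambda>n. form_norm t (X n - x)) \<longlonglongrightarrow> 0"
  shows "X \<longlonglongrightarrow> x"
proof -
  have "\<forall>n. norm (X n - x) \<le> form_norm t (X n - x)"
    using norm_le_form_norm[OF assms(1)] by blast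
  then have "(\<lambda>n. X n - x) \<longlonglongrightarrow> 0"
    by (rule Lim_null_comparison[OF always_eventually assms(2)])
  then show ?thesis
    by (rule LIM_zero_cancel)
qed

lemma Vf_bounded_closed:
  assumes t: "(t::'a sform) \<in> Vf" and "form_bounded t"
  shows "form_closed t"
proof -
  obtain M where "0 \<le> M" and M: "\<And>x. Re (fval t x x) \<le> M * (norm x)\<^sup>2"
    using Vf_bounded_quadratic_bound[OF assms] by blast
  define K where "K = sqrt (M + 1 + form_m t)"
  have K: "K\<^sup>2 = M + 1 + form_m t"
    using \<open>0 \<le> M\<close> form_m_nonneg[OF t] by (simp add: K_def)
  have dominated: "form_norm t v \<le> K * norm v" for v
  proof (rule power2_le_imp_le)
    show "(form_norm t v)\<^sup>2 \<le> (K * norm v)\<^sup>2"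
      using M[of v] by (simp add: form_norm_sq(1)[OF t] power_mult_distrib K algebra_simps)
    show "0 \<le> K * norm v"
      using \<open>0 \<le> M\<close> form_m_nonneg[OF t] by (simp add: K_def)
  qed
  show ?thesis
    unfolding form_closed_iff[OF t]
  proof (intro allI impI, elim conjE)
    fix X
    assume "form_Cauchy t X"
    then obtain x where X: "X \<longlonglongrightarrow> x"
      using Cauchy_convergent[OF form_Cauchy_imp_Cauchy[OF t]] unfolding convergent_def by blast
    have "(\<lambda>n. norm (X n - x)) \<longlonglongrightarrow> 0"
      using X by (simp add: tendsto_norm_zero_iff LIM_zero_iff)
    then have lim: "(\<lambda>n. K * norm (X n - x)) \<longlonglongrightarrow> 0"
      by (rule tendsto_mult_right_zero)
    have bound: "\<forall>n. norm (form_norm t (X n - x)) \<le> K * norm (X n - x)"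
      using dominated form_norm_sq(2)[OF t] by simp
    have "(\<lambda>n. form_norm t (X n - x)) \<longlonglongrightarrow> 0"
      by (rule Lim_null_comparison[OF always_eventually[OF bound] lim])
    then show "\<exists>x\<in>fdom t. (\<lambda>n. form_norm t (X n - x)) \<longlonglongrightarrow> 0"
      using VfD(4)[OF assms] by blast
  qed
qed

lemma zero_form_Cf: "(zero_form::'a sform) \<in> Cf"
proof -
  have "(zero_form::'a sform) \<in> Vf"
    unfolding Vf_def is_form_def form_positive_def zero_form_def csubspace_def by simp
  then show ?thesis
    unfolding Cf_def using Vf_bounded_closed form_bounded_zero_form by blast
qed

lemma form_norm_sq_equiv:
  assumes t: "(t::'a sform) \<in> Vf"
  shows "Re (fval t x x) + (norm x)\<^sup>2 \<le> (form_norm t x)\<^sup>2"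
    and "(form_norm t x)\<^sup>2 \<le> (1 + form_m t) * (Re (fval t x x) + (norm x)\<^sup>2)"
  using Vf_diag_nonneg(2)[OF t, of x] form_m_nonneg[OF t]
  by (simp_all add: form_norm_sq(1)[OF t] algebra_simps)

lemma form_norm_le_form_sum:
  assumes b: "(b::'a sform) \<in> Vf" and c: "c \<in> Vf" and s: "form_sum b c \<in> Vf"
    and x: "x \<in> fdom b" "x \<in> fdom c"
  shows "form_norm b x \<le> sqrt (1 + form_m b) * form_norm (form_sum b c) x"
proof (rule power2_le_imp_le)
  have mb: "0 \<le> form_m b"
    using form_m_nonneg[OF b] .
  have "(form_norm b x)\<^sup>2 \<le> (1 + form_m b) * (Re (fval b x x) + (norm x)\<^sup>2)"
    by (rule form_norm_sq_equiv(2)[OF b])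
  also have "\<dots> \<le> (1 + form_m b) * (Re (fval (form_sum b c) x x) + (norm x)\<^sup>2)"
    using x Vf_diag_nonneg(2)[OF c, of x] mb by (intro mult_left_mono) (simp_all add: fval_form_sum)
  also have "\<dots> \<le> (1 + form_m b) * (form_norm (form_sum b c) x)\<^sup>2"
    using form_norm_sq_equiv(1)[OF s] mb by (intro mult_left_mono) simp_all
  also have "\<dots> = (sqrt (1 + form_m b) * form_norm (form_sum b c) x)\<^sup>2"
    using mb by (simp add: power_mult_distrib)
  finally show "(form_norm b x)\<^sup>2 \<le> (sqrt (1 + form_m b) * form_norm (form_sum b c) x)\<^sup>2" .
  show "0 \<le> sqrt (1 + form_m b) * form_norm (form_sum b c) x"
    using mb form_norm_sq(2)[OF s] by simp
qed

lemma form_sum_norm_le: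
  assumes b: "(b::'a sform) \<in> Vf" and c: "c \<in> Vf" and s: "form_sum b c \<in> Vf"
    and x: "x \<in> fdom b" "x \<in> fdom c"
  shows "form_norm (form_sum b c) x \<le> sqrt (1 + form_m (form_sum b c)) * (form_norm b x + form_norm c x)"
proof (rule power2_le_imp_le)
  let ?m = "form_m (form_sum b c)"
  have ms: "0 \<le> ?m"
    using form_m_nonneg[OF s] .
  have nonneg: "0 \<le> form_norm b x" "0 \<le> form_norm c x"
    using form_norm_sq(2)[OF b] form_norm_sq(2)[OF c] by blast+
  have "(form_norm (form_sum b c) x)\<^sup>2 \<le> (1 + ?m) * (Re (fval (form_sum b c) x x) + (norm x)\<^sup>2)"
    by (rule form_norm_sq_equiv(2)[OF s])
  also have "\<dots> \<le> (1 + ?m) * ((Re (fval b x x) + (norm x)\<^sup>2) + (Re (fval c x x) + (norm x)\<^sup>2))"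
    using x ms by (intro mult_left_mono) (simp_all add: fval_form_sum)
  also have "\<dots> \<le> (1 + ?m) * ((form_norm b x)\<^sup>2 + (form_norm c x)\<^sup>2)"
    using form_norm_sq_equiv(1)[OF b] form_norm_sq_equiv(1)[OF c] ms
    by (intro mult_left_mono add_mono) simp_all
  also have "\<dots> \<le> (1 + ?m) * (form_norm b x + form_norm c x)\<^sup>2"
    using nonneg ms by (intro mult_left_mono) (simp_all add: power2_sum)
  also have "\<dots> = (sqrt (1 + ?m) * (form_norm b x + form_norm c x))\<^sup>2"
    using ms by (simp add: power_mult_distrib)
  finally show "(form_norm (form_sum b c) x)\<^sup>2 \<le> (sqrt (1 + ?m) * (form_norm b x + form_norm c x))\<^sup>2" .
  show "0 \<le> sqrt (1 + ?m) * (form_norm b x + form_norm c x)"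
    using ms nonneg by simp
qed

lemma form_Cauchy_form_sum_imp_form_Cauchy:
  assumes b: "(b::'a sform) \<in> Vf" and c: "c \<in> Vf" and s: "form_sum b c \<in> Vf"
    and X: "\<forall>n. X n \<in> fdom (form_sum b c)" and "form_Cauchy (form_sum b c) X"
  shows "form_Cauchy b X"
proof (rule form_Cauchy_dominated[OF assms(5)])
  show "0 < sqrt (1 + form_m b)"
    using form_m_nonneg[OF b] by simp
  have "X m - X n \<in> fdom (form_sum b c)" for m n
    using csubspace_diff[OF VfD(1)[OF s]] X by blast
  then show "form_norm b (X m - X n) \<le> sqrt (1 + form_m b) * form_norm (form_sum b c) (X m - X n)" for m n
    using form_norm_le_form_sum[OF b c s] by simp
qed

lemma form_sum_norm_tendsto:
  assumes b: "(b::'a sform) \<in> Vf" and c: "c \<in> Vf" and s: "form_sum b c \<in> Vf"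
    and X: "\<forall>n. X n \<in> fdom (form_sum b c)" and x: "x \<in> fdom (form_sum b c)"
    and lim_b: "(\<lambda>n. form_norm b (X n - x)) \<longlonglongrightarrow> 0"
    and lim_c: "(\<lambda>n. form_norm c (X n - x)) \<longlonglongrightarrow> 0"
  shows "(\<lambda>n. form_norm (form_sum b c) (X n - x)) \<longlonglongrightarrow> 0"
proof -
  define K where "K = sqrt (1 + form_m (form_sum b c))"
  have lim: "(\<lambda>n. K * (form_norm b (X n - x) + form_norm c (X n - x))) \<longlonglongrightarrow> 0"
    using lim_b lim_c by (intro tendsto_mult_right_zero tendsto_add_zero)
  have bound: "\<forall>n. norm (form_norm (form_sum b c) (X n - x))
      \<le> K * (form_norm b (X n - x) + form_norm c (X n - x))"
  proof
    fix n
    have "X n - x \<in> fdom (form_sum b c)"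
      using csubspace_diff[OF VfD(1)[OF s]] X x by blast
    then show "norm (form_norm (form_sum b c) (X n - x))
        \<le> K * (form_norm b (X n - x) + form_norm c (X n - x))"
      using form_sum_norm_le[OF b c s] form_norm_sq(2)[OF s] by (simp add: K_def)
  qed
  show ?thesis
    by (rule Lim_null_comparison[OF always_eventually[OF bound] lim])
qed

text \<open>A Cauchy sequence for \<open>b + c\<close> is Cauchy for \<open>b\<close> and for \<open>c\<close>; their limits agree
  because both form norms dominate the norm of the space.\<close>

lemma form_closed_form_sum:
  assumes b: "(b::'a sform) \<in> Vf" and c: "c \<in> Vf" and "oplus_defined b c"
    and "form_closed b" and "form_closed c"
  shows "form_closed (form_sum b c)"
proof -
  have s: "form_sum b c \<in> Vf" and s': "form_sum c b \<in> Vf"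
    using Vf_form_sum[OF b c] Vf_form_sum[OF c b] \<open>oplus_defined b c\<close> oplus_defined_commute by blast+
  show ?thesis
    unfolding form_closed_iff[OF s]
  proof (intro allI impI, elim conjE)
    fix X
    assume X: "\<forall>n. X n \<in> fdom (form_sum b c)" and Cauchy: "form_Cauchy (form_sum b c) X"
    have "form_Cauchy b X"
      using form_Cauchy_form_sum_imp_form_Cauchy[OF b c s X Cauchy] .
    moreover have "form_Cauchy c X"
      using form_Cauchy_form_sum_imp_form_Cauchy[OF c b s', unfolded form_sum_commute[of c b]] X Cauchy
      by blast
    ultimately obtain xb xc where "xb \<in> fdom b" and lim_b: "(\<lambda>n. form_norm b (X n - xb)) \<longlonglongrightarrow> 0"
      and "xc \<in> fdom c" and lim_c: "(\<lambda>n. form_norm c (X n - xc)) \<longlonglongrightarrow> 0"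
      using X \<open>form_closed b\<close> \<open>form_closed c\<close> unfolding form_closed_iff[OF b] form_closed_iff[OF c]
      by (metis IntD1 IntD2 fdom_form_sum)
    have "xb = xc"
      using form_norm_tendsto_imp_LIMSEQ[OF b lim_b] form_norm_tendsto_imp_LIMSEQ[OF c lim_c]
      by (rule LIMSEQ_unique)
    with \<open>xb \<in> fdom b\<close> \<open>xc \<in> fdom c\<close> have "xb \<in> fdom (form_sum b c)"
      by simp
    with form_sum_norm_tendsto[OF b c s X _ lim_b] lim_c \<open>xb = xc\<close>
    show "\<exists>x\<in>fdom (form_sum b c). (\<lambda>n. form_norm (form_sum b c) (X n - x)) \<longlonglongrightarrow> 0"
      by blast
  qed
qed

lemma Cf_form_sum:
  assumes "(b::'a sform) \<in> Cf" and "c \<in> Cf" and "oplus_defined b c"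
  shows "form_sum b c \<in> Cf"
  using assms Vf_form_sum form_closed_form_sum unfolding Cf_def by blast

lemma restrict_oplus_assoc_Some:
  assumes a: "(a::'a sform) \<in> Cf" and b: "b \<in> Cf" and c: "c \<in> Cf"
    and "restrict_oplus Cf a b = Some d" and "restrict_oplus Cf d c = Some e"
  shows "restrict_oplus Cf b c = Some (form_sum b c) \<and> restrict_oplus Cf a (form_sum b c) = Some e"
proof -
  have Vf: "a \<in> Vf" "b \<in> Vf" "c \<in> Vf"
    using a b c by (simp_all add: Cf_def)
  have ab: "oplus_defined a b" and d: "d = form_sum a b"
    and dc: "oplus_defined d c" and e: "e = form_sum d c" and "e \<in> Cf"
    using assms(4,5) unfolding restrict_oplus_eq_Some_iff by auto
  note bc = oplus_defined_assoc[OF Vf ab dc[unfolded d]]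
  have "form_sum b c \<in> Cf"
    using Cf_form_sum[OF b c bc(1)] .
  with bc \<open>e \<in> Cf\<close> show ?thesis
    unfolding restrict_oplus_eq_Some_iff e d form_sum_assoc by simp
qed

lemma restrict_oplus_assoc:
  assumes "(a::'a sform) \<in> Cf" and "b \<in> Cf" and "c \<in> Cf"
  shows "Option.bind (restrict_oplus Cf a b) (\<lambda>d. restrict_oplus Cf d c)
       = Option.bind (restrict_oplus Cf b c) (restrict_oplus Cf a)"
proof -
  have left_to_right: "Option.bind (restrict_oplus Cf b' c') (restrict_oplus Cf a') = Some e"
    if "a' \<in> Cf" "b' \<in> Cf" "c' \<in> Cf"
      and "Option.bind (restrict_oplus Cf a' b') (\<lambda>d. restrict_oplus Cf d c') = Some e"
    for a' b' c' :: "'a sform" and e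
    using that restrict_oplus_assoc_Some[OF that(1-3)] by (cases "restrict_oplus Cf a' b'") auto
  have swap: "Option.bind (restrict_oplus Cf x y) (\<lambda>d. restrict_oplus Cf d z)
      = Option.bind (restrict_oplus Cf y x) (restrict_oplus Cf z)" for x y z
  proof -
    have "(\<lambda>d. restrict_oplus Cf d z) = restrict_oplus Cf z"
      by (rule ext) (rule restrict_oplus_commute)
    then show ?thesis
      by (simp only: restrict_oplus_commute[of Cf x y])
  qed
  have "Option.bind (restrict_oplus Cf a b) (\<lambda>d. restrict_oplus Cf d c) = Some e
      \<longleftrightarrow> Option.bind (restrict_oplus Cf b c) (restrict_oplus Cf a) = Some e" for e
    using left_to_right[OF assms, of e] left_to_right[OF assms(3,2,1), of e]
    unfolding swap[of a b c] swap[of c b a] by blast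
  then show ?thesis
    by (metis option.exhaust)
qed

end

theorem theorem4p15:
  assumes "infinite_dimensional TYPE('a::chilbert_space)"
  shows "generalized_effect_algebra (Cf :: 'a sform set) (restrict_oplus Cf) zero_form"
proof -
  note nontrivial = infinite_dimensional_nontrivial[OF assms]
  show ?thesis
    unfolding generalized_effect_algebra_def
  proof (intro conjI ballI allI impI)
    show "zero_form \<in> (Cf :: 'a sform set)"
      by (rule zero_form_Cf[OF nontrivial])
    show "c \<in> Cf" if "restrict_oplus Cf a b = Some c" for a b c :: "'a sform"
      using that unfolding restrict_oplus_eq_Some_iff by blast
    show "restrict_oplus Cf a b = restrict_oplus Cf b a" for a b :: "'a sform"
      by (rule restrict_oplus_commute)
    show "Option.bind (restrict_oplus Cf a b) (\<lambda>d. restrict_oplus Cf d c)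
        = Option.bind (restrict_oplus Cf b c) (restrict_oplus Cf a)"
      if "a \<in> Cf" "b \<in> Cf" "c \<in> Cf" for a b c :: "'a sform"
      using restrict_oplus_assoc[OF nontrivial that] .
    show "restrict_oplus Cf a zero_form = Some a" if "a \<in> Cf" for a :: "'a sform"
      using restrict_oplus_zero_form[OF that] .
    show "b = c" if "a \<in> Cf" "b \<in> Cf" "c \<in> Cf"
      and "restrict_oplus Cf a b \<noteq> None \<and> restrict_oplus Cf a b = restrict_oplus Cf a c"
      for a b c :: "'a sform"
      using that(4) restrict_oplus_cancel[OF that(1-3)] by (metis not_None_eq)
    show "a = zero_form" and "b = zero_form"
      if "a \<in> Cf" "b \<in> Cf" and "restrict_oplus Cf a b = Some zero_form" for a b :: "'a sform"
      using that restrict_oplus_eq_zero_form[OF that(1,2)]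
        restrict_oplus_eq_zero_form[OF that(2,1)] restrict_oplus_commute[of Cf a b] by simp_all
  qed
qed

end
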